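(* Let $G$ be a graph, $k\in\mathbb N$, and let $\mathcal F$ be a set of finite stars in $\vec S_k(G)$ all of which have finite interior. Let $\sigma\subseteq\vec S_k(G)$ be a star of left-tight separations, and let $X\subseteq\mathrm{int}(\sigma)$ with $|X|<k$. Suppose that either $X$ is a critical vertex set of $\mathrm{torso}(\sigma)$, or infinitely many separations $(A,B)\in\sigma$ satisfy $A\cap B=X$. Then there is a non-principal $\mathcal F$-tangle $\tau$ of $S_k(G)$ with $\sigma\subseteq\tau$.
   Context: Graphs may be infinite. A separation of $G$ is a set $\{A,B\}$ with $A,B\subseteq V(G)$, $A\cup B=V(G)$ and no edge of $G$ between $A\setminus B$ and $B\setminus A$; its order is $|A\cap B|$. $S_k(G)$ is the set of separations of order $<k$ and $\vec S_k(G)$ the set of their orientations $(A,B)$, $(B,A)$. Order: $(A,B)\le(C,D)$ iff $A\subseteq C$ and $B\supseteq D$. $(A,B)$ is left-tight if some component of $G[A\setminus B]$ has neighbourhood in $G$ equal to $A\cap B$. An orientation of $S_k(G)$ is a set containing exactly one orientation of each element; consistent if there are no distinct $\{A,B\},\{C,D\}\in S_k(G)$ with $(A,B)<(C,D)$, $(B,A)\in O$, $(C,D)\in O$; principal if for every set $Y$ of fewer than $k$ vertices it contains $(V(G)\setminus V(K),V(K)\cup Y)$ for some component $K$ of $G-Y$, and non-principal otherwise. A star is a set $\sigma$ of oriented finite-order separations, not containing $(V(G),V(G))$, with $(A,B)\le(D,C)$ for distinct $(A,B),(C,D)\in\sigma$; its interior is $\mathrm{int}(\sigma)=\bigcap_{(A,B)\in\sigma}B$;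 $\mathrm{torso}(\sigma)$ is obtained from $G[\mathrm{int}(\sigma)]$ by adding an edge $uv$ whenever distinct $u,v\in\mathrm{int}(\sigma)$ lie together in $A\cap B$ for some $(A,B)\in\sigma$. An $\mathcal F$-tangle of $S_k(G)$ is a consistent orientation of $S_k(G)$ having no element of $\mathcal F$ as a subset. A critical vertex set of a graph $H$ is a finite $X\subseteq V(H)$ such that infinitely many components $K$ of $H-X$ satisfy $N_H(K)=X$. *)

theory Defs
  imports Main
begin

definition graph :: "'a set \<Rightarrow> ('a \<Rightarrow> 'a \<Rightarrow> bool) \<Rightarrow> bool" where
  "graph V E \<longleftrightarrow> (\<forall>u v. E u v \<longrightarrow> u \<in> V \<and> v \<in> V \<and> u \<noteq> v \<and> E v u)"

definition component_in :: "'a set \<Rightarrow> ('a \<Rightarrow> 'a \<Rightarrow> bool) \<Rightarrow> 'a set \<Rightarrow> 'a set \<Rightarrow> bool" where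
  "component_in V E S K \<longleftrightarrow>
     (\<exists>x \<in> S \<inter> V. K = {y. (\<lambda>u v. E u v \<and> u \<in> S \<inter> V \<and> v \<in> S \<inter> V)\<^sup>*\<^sup>* x y})"

definition nbhd :: "'a set \<Rightarrow> ('a \<Rightarrow> 'a \<Rightarrow> bool) \<Rightarrow> 'a set \<Rightarrow> 'a set" where
  "nbhd V E C = {v \<in> V - C. \<exists>u \<in> C. E u v}"

text \<open>Oriented separations (A,B); the unoriented separation {A,B} corresponds to
the two orientations (A,B), (B,A).\<close>
definition is_sep :: "'a set \<Rightarrow> ('a \<Rightarrow> 'a \<Rightarrow> bool) \<Rightarrow> 'a set \<times> 'a set \<Rightarrow> bool" where
  "is_sep V E s \<longleftrightarrow> (case s of (A, B) \<Rightarrow>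
     A \<subseteq> V \<and> B \<subseteq> V \<and> A \<union> B = V \<and> (\<forall>u \<in> A - B. \<forall>v \<in> B - A. \<not> E u v))"

definition finite_order_seps :: "'a set \<Rightarrow> ('a \<Rightarrow> 'a \<Rightarrow> bool) \<Rightarrow> ('a set \<times> 'a set) set" where
  "finite_order_seps V E = {(A, B). is_sep V E (A, B) \<and> finite (A \<inter> B)}"

definition vS :: "'a set \<Rightarrow> ('a \<Rightarrow> 'a \<Rightarrow> bool) \<Rightarrow> nat \<Rightarrow> ('a set \<times> 'a set) set" where
  "vS V E k = {(A, B). is_sep V E (A, B) \<and> finite (A \<inter> B) \<and> card (A \<inter> B) < k}"

definition sep_le :: "'a set \<times> 'a set \<Rightarrow> 'a set \<times> 'a set \<Rightarrow> bool" where
  "sep_le s t \<longleftrightarrow> fst s \<subseteq> fst t \<and> snd t \<subseteq> snd s"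

definition sep_less :: "'a set \<times> 'a set \<Rightarrow> 'a set \<times> 'a set \<Rightarrow> bool" where
  "sep_less s t \<longleftrightarrow> sep_le s t \<and> s \<noteq> t"

definition flip :: "'a set \<times> 'a set \<Rightarrow> 'a set \<times> 'a set" where
  "flip s = (snd s, fst s)"

definition left_tight :: "'a set \<Rightarrow> ('a \<Rightarrow> 'a \<Rightarrow> bool) \<Rightarrow> 'a set \<times> 'a set \<Rightarrow> bool" where
  "left_tight V E s \<longleftrightarrow>
     (\<exists>C. component_in V E (fst s - snd s) C \<and> nbhd V E C = fst s \<inter> snd s)"

definition is_orientation :: "'a set \<Rightarrow> ('a \<Rightarrow> 'a \<Rightarrow> bool) \<Rightarrow> nat \<Rightarrow> ('a set \<times> 'a set) set \<Rightarrow> bool" where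
  "is_orientation V E k Or \<longleftrightarrow> Or \<subseteq> vS V E k \<and>
     (\<forall>s \<in> vS V E k. s \<in> Or \<or> flip s \<in> Or) \<and>
     (\<forall>s \<in> Or. flip s \<in> Or \<longrightarrow> flip s = s)"

definition consistent :: "('a set \<times> 'a set) set \<Rightarrow> bool" where
  "consistent Or \<longleftrightarrow> \<not> (\<exists>s t. s \<noteq> t \<and> s \<noteq> flip t \<and> sep_less s t \<and> flip s \<in> Or \<and> t \<in> Or)"

definition principal :: "'a set \<Rightarrow> ('a \<Rightarrow> 'a \<Rightarrow> bool) \<Rightarrow> nat \<Rightarrow> ('a set \<times> 'a set) set \<Rightarrow> bool" where
  "principal V E k Or \<longleftrightarrow>
     (\<forall>Y. Y \<subseteq> V \<and> finite Y \<and> card Y < k \<longrightarrow>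
        (\<exists>K. component_in V E (V - Y) K \<and> (V - K, K \<union> Y) \<in> Or))"

definition is_star :: "'a set \<Rightarrow> ('a \<Rightarrow> 'a \<Rightarrow> bool) \<Rightarrow> ('a set \<times> 'a set) set \<Rightarrow> bool" where
  "is_star V E \<sigma> \<longleftrightarrow> \<sigma> \<subseteq> finite_order_seps V E \<and> (V, V) \<notin> \<sigma> \<and>
     (\<forall>s \<in> \<sigma>. \<forall>t \<in> \<sigma>. s \<noteq> t \<longrightarrow> sep_le s (flip t))"

definition interior :: "'a set \<Rightarrow> ('a set \<times> 'a set) set \<Rightarrow> 'a set" where
  "interior V \<sigma> = V \<inter> (\<Inter>s \<in> \<sigma>. snd s)"

text \<open>Edge relation of torso(sigma), whose vertex set is interior V sigma.\<close>
definition torso_edges :: "'a set \<Rightarrow> ('a \<Rightarrow> 'a \<Rightarrow> bool) \<Rightarrow> ('a set \<times> 'a set) set \<Rightarrow> 'a \<Rightarrow> 'a \<Rightarrow> bool" where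
  "torso_edges V E \<sigma> u v \<longleftrightarrow> u \<in> interior V \<sigma> \<and> v \<in> interior V \<sigma> \<and>
     (E u v \<or> (u \<noteq> v \<and> (\<exists>s \<in> \<sigma>. u \<in> fst s \<inter> snd s \<and> v \<in> fst s \<inter> snd s)))"

definition critical :: "'a set \<Rightarrow> ('a \<Rightarrow> 'a \<Rightarrow> bool) \<Rightarrow> 'a set \<Rightarrow> bool" where
  "critical W H X \<longleftrightarrow> finite X \<and> X \<subseteq> W \<and>
     infinite {K. component_in W H (W - X) K \<and> nbhd W H K = X}"

definition F_tangle :: "'a set \<Rightarrow> ('a \<Rightarrow> 'a \<Rightarrow> bool) \<Rightarrow> nat \<Rightarrow> ('a set \<times> 'a set) set set
                       \<Rightarrow> ('a set \<times> 'a set) set \<Rightarrow> bool" where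
  "F_tangle V E k \<F> Or \<longleftrightarrow> is_orientation V E k Or \<and> consistent Or \<and> (\<forall>\<rho> \<in> \<F>. \<not> \<rho> \<subseteq> Or)"

end

theory Submission
  imports Defs
begin

text \<open>Both hypotheses provide an infinite family \<open>\<C>\<close> of components of \<open>G - X\<close> such that
  every \<open>(A, B) \<in> \<sigma>\<close> has all but finitely many members of \<open>\<C>\<close> inside \<open>B - A\<close>. If infinitely many
  separations of \<open>\<sigma>\<close> have separator \<open>X\<close>, their tight components form \<open>\<C>\<close>, distinct because \<open>\<sigma>\<close> is a
  star. If \<open>X\<close> is critical in the torso, \<open>\<C>\<close> consists of the components of \<open>G - X\<close> meeting
  the interior: there are infinitely many, since a path of \<open>G - X\<close> between interior vertices
  can be rerouted through the torso, so distinct components of \<open>torso(\<sigma>) - X\<close> lie in distinct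
  components of \<open>G - X\<close>.

  Given \<open>\<C>\<close>, fix a free ultrafilter \<open>\<U>\<close> on \<open>\<C>\<close> and orient every separation of order \<open>< k\<close>
  towards the side whose strict part contains a \<open>\<U>\<close>-large set of members of \<open>\<C>\<close>. A finite
  separator meets only finitely many components, so exactly one side qualifies, and the result
  is a consistent orientation containing \<open>\<sigma>\<close>. A star with finite interior is not contained in
  it, since the members of \<open>\<C>\<close> inside the interior all meet a finite set; and it is not
  principal, since no single component of \<open>G - X\<close> is \<open>\<U>\<close>-large.\<close>

section \<open>Free ultrafilters\<close>

definition free_ultrafilter_on :: "'b set \<Rightarrow> 'b set set \<Rightarrow> bool" where
  "free_ultrafilter_on C \<U> \<longleftrightarrow> \<U> \<subseteq> Pow C \<and> (\<forall>S\<in>\<U>. infinite S) \<and> (\<forall>S\<in>\<U>. \<forall>T\<in>\<U>. S \<inter> T \<in> \<U>)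
     \<and> (\<forall>S\<in>\<U>. \<forall>T. S \<subseteq> T \<and> T \<subseteq> C \<longrightarrow> T \<in> \<U>) \<and> (\<forall>S. S \<subseteq> C \<longrightarrow> S \<in> \<U> \<or> C - S \<in> \<U>)"

definition infinite_fip :: "'b set \<Rightarrow> 'b set set \<Rightarrow> bool" where
  "infinite_fip C M \<longleftrightarrow> (\<forall>F. F \<subseteq> M \<and> finite F \<longrightarrow> infinite (C \<inter> \<Inter>F))"

lemma infinite_fip_insertD:
  assumes "infinite_fip C M" "\<not> infinite_fip C (insert S M)"
  obtains F where "F \<subseteq> M" "finite F" "finite (C \<inter> \<Inter>F \<inter> S)"
proof -
  from assms(2) obtain F where F: "F \<subseteq> insert S M" "finite F" "finite (C \<inter> \<Inter>F)"
    unfolding infinite_fip_def by blast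
  have "C \<inter> \<Inter>(F - {S}) \<inter> S \<subseteq> C \<inter> \<Inter>F" by blast
  then have "finite (C \<inter> \<Inter>(F - {S}) \<inter> S)" using F(3) by (rule finite_subset)
  with F(1,2) show ?thesis by (intro that[of "F - {S}"]) auto
qed

lemma maximal_infinite_fip_exists:
  assumes "infinite C"
  obtains M where "infinite_fip C M" "\<And>S. infinite_fip C (insert S M) \<Longrightarrow> S \<in> M"
proof -
  let ?A = "{M. infinite_fip C M}"
  have "\<exists>M\<in>?A. \<forall>N\<in>?A. M \<subseteq> N \<longrightarrow> N = M"
  proof (rule subset_Zorn_nonempty)
    show "?A \<noteq> {}"
      using assms unfolding infinite_fip_def by (auto intro: exI[of _ "{}"])
  next
    fix Ch assume ne: "Ch \<noteq> {}" and ch: "subset.chain ?A Ch"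
    show "\<Union>Ch \<in> ?A" unfolding mem_Collect_eq infinite_fip_def
    proof (intro allI impI)
      fix F assume F: "F \<subseteq> \<Union>Ch \<and> finite F"
      then obtain N where "N \<in> Ch" "F \<subseteq> N"
        using finite_subset_Union_chain[OF _ _ ne ch] by blast
      with F ch show "infinite (C \<inter> \<Inter>F)"
        unfolding subset.chain_def infinite_fip_def by blast
    qed
  qed
  then show ?thesis using that by blast
qed

text \<open>A maximal family with the infinite finite-intersection property decides every subset
  of \<open>C\<close>, so the sets containing a finite intersection of its members form the ultrafilter.\<close>
lemma free_ultrafilter_exists:
  assumes "infinite C"
  obtains \<U> where "free_ultrafilter_on C \<U>"
proof -
  obtain M where M: "infinite_fip C M" and max: "\<And>S. infinite_fip C (insert S M) \<Longrightarrow> S \<in> M"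
    using maximal_infinite_fip_exists[OF assms] by blast
  define \<U> where "\<U> = {S. S \<subseteq> C \<and> (\<exists>F. F \<subseteq> M \<and> finite F \<and> C \<inter> \<Inter>F \<subseteq> S)}"
  have member: "S \<in> \<U>" if "S \<subseteq> C" "infinite_fip C (insert S M)" for S
    using max[OF that(2)] that(1) unfolding \<U>_def by (auto intro!: exI[of _ "{S}"])
  have decide: "S \<in> \<U> \<or> C - S \<in> \<U>" if S: "S \<subseteq> C" for S
  proof (rule ccontr)
    assume "\<not> (S \<in> \<U> \<or> C - S \<in> \<U>)"
    with member S obtain F1 F2 where
      F1: "F1 \<subseteq> M" "finite F1" "finite (C \<inter> \<Inter>F1 \<inter> S)" and
      F2: "F2 \<subseteq> M" "finite F2" "finite (C \<inter> \<Inter>F2 \<inter> (C - S))"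
      using infinite_fip_insertD[OF M] by (metis Diff_subset)
    have "C \<inter> \<Inter>(F1 \<union> F2) \<subseteq> (C \<inter> \<Inter>F1 \<inter> S) \<union> (C \<inter> \<Inter>F2 \<inter> (C - S))" by blast
    with F1 F2 M show False
      unfolding infinite_fip_def by (meson finite_UnI finite_subset le_sup_iff)
  qed
  have "free_ultrafilter_on C \<U>"
    unfolding free_ultrafilter_on_def
  proof (intro conjI ballI allI impI decide)
    show "\<U> \<subseteq> Pow C" unfolding \<U>_def by blast
  next
    fix S assume "S \<in> \<U>"
    then obtain F where "F \<subseteq> M" "finite F" "C \<inter> \<Inter>F \<subseteq> S" unfolding \<U>_def by blast
    with M show "infinite S" unfolding infinite_fip_def by (meson finite_subset)
  next
    fix S T assume "S \<in> \<U>" "T \<in> \<U>"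
    then obtain F1 F2 where "F1 \<subseteq> M" "finite F1" "C \<inter> \<Inter>F1 \<subseteq> S"
      "F2 \<subseteq> M" "finite F2" "C \<inter> \<Inter>F2 \<subseteq> T" "S \<subseteq> C" "T \<subseteq> C" unfolding \<U>_def by blast
    then show "S \<inter> T \<in> \<U>" unfolding \<U>_def by (intro CollectI conjI exI[of _ "F1 \<union> F2"]) auto
  next
    fix S T assume "S \<in> \<U>" "S \<subseteq> T \<and> T \<subseteq> C"
    then show "T \<in> \<U>" unfolding \<U>_def by blast
  qed
  then show ?thesis by (rule that)
qed

lemma free_ultrafilter_onD:
  assumes "free_ultrafilter_on C \<U>"
  shows "S \<in> \<U> \<Longrightarrow> infinite S" "S \<in> \<U> \<Longrightarrow> T \<in> \<U> \<Longrightarrow> S \<inter> T \<in> \<U>"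
    "S \<subseteq> C \<Longrightarrow> S \<in> \<U> \<or> C - S \<in> \<U>"
  using assms unfolding free_ultrafilter_on_def by simp_all

lemma free_ultrafilter_on_complement:
  "free_ultrafilter_on C \<U> \<Longrightarrow> S \<subseteq> C \<Longrightarrow> S \<notin> \<U> \<Longrightarrow> C - S \<in> \<U>"
  using free_ultrafilter_onD(3)[of C \<U> S] by simp

lemma free_ultrafilter_on_carrier:
  "free_ultrafilter_on C \<U> \<Longrightarrow> C \<in> \<U>"
  unfolding free_ultrafilter_on_def by (metis Diff_empty empty_subsetI finite.emptyI)

section \<open>Components and separations\<close>

lemma graph_sym: "graph V E \<Longrightarrow> E u v \<Longrightarrow> E v u"
  unfolding graph_def by blast

lemma graph_edgeD: "graph V E \<Longrightarrow> E u v \<Longrightarrow> u \<in> V \<and> v \<in> V"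
  unfolding graph_def by blast

definition component_of :: "'a set \<Rightarrow> ('a \<Rightarrow> 'a \<Rightarrow> bool) \<Rightarrow> 'a set \<Rightarrow> 'a \<Rightarrow> 'a set" where
  "component_of V E S x = {y. (\<lambda>u v. E u v \<and> u \<in> S \<inter> V \<and> v \<in> S \<inter> V)\<^sup>*\<^sup>* x y}"

lemma component_in_iff: "component_in V E S K \<longleftrightarrow> (\<exists>x \<in> S \<inter> V. K = component_of V E S x)"
  unfolding component_in_def component_of_def ..

lemma component_of_self: "x \<in> component_of V E S x"
  unfolding component_of_def by simp

lemma component_of_step:
  "y \<in> component_of V E S x \<Longrightarrow> E y z \<Longrightarrow> y \<in> S \<inter> V \<Longrightarrow> z \<in> S \<inter> V \<Longrightarrow> z \<in> component_of V E S x"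
  unfolding component_of_def by (simp add: rtranclp.rtrancl_into_rtrancl)

lemma component_of_subset:
  assumes "x \<in> S \<inter> V"
  shows "component_of V E S x \<subseteq> S \<inter> V"
proof
  fix y assume "y \<in> component_of V E S x"
  then have "(\<lambda>u v. E u v \<and> u \<in> S \<inter> V \<and> v \<in> S \<inter> V)\<^sup>*\<^sup>* x y"
    unfolding component_of_def by simp
  then show "y \<in> S \<inter> V" using assms by (induction rule: rtranclp_induct) simp_all
qed

lemma component_of_trans:
  "y \<in> component_of V E S x \<Longrightarrow> z \<in> component_of V E S y \<Longrightarrow> z \<in> component_of V E S x"
  unfolding component_of_def by (simp add: rtranclp_trans[of _ x y z])

lemma component_of_sym:
  assumes G: "graph V E" and y: "y \<in> component_of V E S x"
  shows "x \<in> component_of V E S y"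
proof -
  let ?R = "\<lambda>u v. E u v \<and> u \<in> S \<inter> V \<and> v \<in> S \<inter> V"
  have "?R\<^sup>*\<^sup>* x y" using y unfolding component_of_def by simp
  then have "?R\<^sup>*\<^sup>* y x"
  proof (induction rule: rtranclp_induct)
    case (step y z)
    then have "?R z y" using graph_sym[OF G] by blast
    then show ?case using converse_rtranclp_into_rtranclp[of ?R z y x] step.IH by blast
  qed simp
  then show ?thesis unfolding component_of_def by simp
qed

lemma component_in_component_of: "x \<in> S \<inter> V \<Longrightarrow> component_in V E S (component_of V E S x)"
  unfolding component_in_iff by blast

lemma component_in_subset:
  assumes "component_in V E S K"
  shows "K \<subseteq> S \<inter> V"
proof -
  obtain x where "x \<in> S \<inter> V" "K = component_of V E S x"
    using assms unfolding component_in_iff by blast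
  then show ?thesis using component_of_subset[of x S V E] by simp
qed

lemma component_in_nonempty: "component_in V E S K \<Longrightarrow> K \<noteq> {}"
  unfolding component_in_iff by (metis component_of_self empty_iff)

lemma component_in_eq_component_of:
  assumes "graph V E" "component_in V E S K" "x \<in> K"
  shows "K = component_of V E S x"
proof -
  obtain x0 where K: "K = component_of V E S x0"
    using assms(2) unfolding component_in_iff by blast
  with assms(1,3) have "x0 \<in> component_of V E S x" by (simp add: component_of_sym)
  show ?thesis
  proof
    show "K \<subseteq> component_of V E S x"
      unfolding K using component_of_trans[OF \<open>x0 \<in> component_of V E S x\<close>] by blast
    show "component_of V E S x \<subseteq> K"
      using assms(3) component_of_trans[of x V E S x0] unfolding K by blast
  qed
qed

lemma component_in_eqI:
  assumes G: "graph V E" and K: "component_in V E S K" and K': "component_in V E S K'"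
    and x: "x \<in> K" "x \<in> K'"
  shows "K = K'"
  using component_in_eq_component_of[OF G K x(1)] component_in_eq_component_of[OF G K' x(2)]
  by simp

lemma components_meeting_finite:
  assumes "graph V E" "finite W"
  shows "finite {K. component_in V E S K \<and> K \<inter> W \<noteq> {}}"
proof -
  have "{K. component_in V E S K \<and> K \<inter> W \<noteq> {}} \<subseteq> component_of V E S ` W"
  proof
    fix K assume "K \<in> {K. component_in V E S K \<and> K \<inter> W \<noteq> {}}"
    then obtain w where "component_in V E S K" "w \<in> K" "w \<in> W" by blast
    then show "K \<in> component_of V E S ` W"
      using component_in_eq_component_of[OF assms(1)] by blast
  qed
  then show ?thesis by (rule finite_surj[OF assms(2)])
qed

lemma component_in_minus:
  assumes C: "component_in V E S C" and N: "nbhd V E C \<subseteq> X" and SX: "S \<inter> X = {}"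
  shows "component_in V E (V - X) C"
proof -
  let ?RS = "\<lambda>u v. E u v \<and> u \<in> S \<inter> V \<and> v \<in> S \<inter> V"
  let ?RX = "\<lambda>u v. E u v \<and> u \<in> (V - X) \<inter> V \<and> v \<in> (V - X) \<inter> V"
  obtain x where x: "x \<in> S \<inter> V" and Cx: "C = component_of V E S x"
    using C unfolding component_in_iff by blast
  have "C = component_of V E (V - X) x"
  proof
    have "?RS \<le> ?RX" using SX by auto
    then have "?RS\<^sup>*\<^sup>* x y \<Longrightarrow> ?RX\<^sup>*\<^sup>* x y" for y by (rule predicate2D[OF rtranclp_mono])
    then show "C \<subseteq> component_of V E (V - X) x"
      unfolding Cx component_of_def by blast
  next
    have "?RX\<^sup>*\<^sup>* x y \<Longrightarrow> y \<in> C" for y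
    proof (induction rule: rtranclp_induct)
      case base then show ?case unfolding Cx by (rule component_of_self)
    next
      case (step y z)
      show ?case
      proof (rule ccontr)
        assume "z \<notin> C"
        with step have "z \<in> nbhd V E C" unfolding nbhd_def by blast
        with N step(2) show False by blast
      qed
    qed
    then show "component_of V E (V - X) x \<subseteq> C"
      unfolding component_of_def by blast
  qed
  moreover have "x \<in> (V - X) \<inter> V" using x SX by blast
  ultimately show ?thesis by (simp add: component_in_component_of)
qed

lemma is_sepD:
  assumes "is_sep V E s"
  shows "fst s \<subseteq> V" "snd s \<subseteq> V" "fst s \<union> snd s = V"
    "u \<in> fst s - snd s \<Longrightarrow> v \<in> snd s - fst s \<Longrightarrow> \<not> E u v"
  using assms by (cases s; simp add: is_sep_def)+

lemma is_sep_flip: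
  assumes "graph V E" "is_sep V E s"
  shows "is_sep V E (flip s)"
proof -
  obtain A B where "s = (A, B)" by fastforce
  with assms(2) show ?thesis unfolding is_sep_def flip_def by (fastforce dest: graph_sym[OF assms(1)])
qed

lemma vS_flip: "graph V E \<Longrightarrow> s \<in> vS V E k \<Longrightarrow> flip s \<in> vS V E k"
  unfolding vS_def using is_sep_flip[of V E s] by (auto simp: flip_def Int_commute)

lemma is_sep_edge_fst:
  assumes G: "graph V E" and sep: "is_sep V E s" and y: "y \<in> fst s - snd s" and yz: "E y z"
  shows "z \<in> fst s"
proof (rule ccontr)
  assume "z \<notin> fst s"
  moreover have "z \<in> V" using graph_edgeD[OF G yz] ..
  ultimately have "z \<in> snd s - fst s" using is_sepD(3)[OF sep] by blast
  with is_sepD(4)[OF sep y] yz show False by blast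
qed

lemma is_sep_edge_snd:
  assumes "graph V E" "is_sep V E s" "y \<in> snd s - fst s" "E y z"
  shows "z \<in> snd s"
  using is_sep_edge_fst[OF assms(1) is_sep_flip[OF assms(1,2)]] assms(3,4) by (simp add: flip_def)

lemma component_in_strict_side:
  assumes G: "graph V E" and sep: "is_sep V E s" and K: "component_in V E S K"
    and avoid: "K \<inter> (fst s \<inter> snd s) = {}" and x: "x \<in> K" "x \<in> fst s - snd s"
  shows "K \<subseteq> fst s - snd s"
proof -
  have "(\<lambda>u v. E u v \<and> u \<in> S \<inter> V \<and> v \<in> S \<inter> V)\<^sup>*\<^sup>* x y \<Longrightarrow> y \<in> fst s - snd s" for y
  proof (induction rule: rtranclp_induct)
    case base then show ?case using x by simp
  next
    case (step y z)
    have "z \<in> component_of V E S x"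
      unfolding component_of_def using rtranclp.rtrancl_into_rtrancl[OF step(1,2)] by simp
    then have "z \<in> K" using component_in_eq_component_of[OF G K x(1)] by simp
    with avoid is_sep_edge_fst[OF G sep step.IH] step(2) show ?case by blast
  qed
  then show ?thesis
    using component_in_eq_component_of[OF G K x(1)] unfolding component_of_def by blast
qed

lemma component_in_side:
  assumes G: "graph V E" and sep: "is_sep V E s" and K: "component_in V E S K"
    and avoid: "K \<inter> (fst s \<inter> snd s) = {}"
  shows "K \<subseteq> fst s - snd s \<or> K \<subseteq> snd s - fst s"
proof -
  obtain x where x: "x \<in> K" using component_in_nonempty[OF K] by blast
  then have "x \<in> fst s - snd s \<or> x \<in> snd s - fst s"
    using avoid component_in_subset[OF K] is_sepD(3)[OF sep] by blast
  then show ?thesis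
  proof
    assume "x \<in> fst s - snd s"
    then show ?thesis using component_in_strict_side[OF G sep K avoid x] by blast
  next
    assume "x \<in> snd s - fst s"
    moreover have "K \<inter> (fst (flip s) \<inter> snd (flip s)) = {}" using avoid by (auto simp: flip_def)
    ultimately show ?thesis
      using component_in_strict_side[OF G is_sep_flip[OF G sep] K _ x] by (auto simp: flip_def)
  qed
qed

lemma components_straddling_finite:
  assumes G: "graph V E" and sep: "is_sep V E s" and fin: "finite (fst s \<inter> snd s)"
  shows "finite {K. component_in V E S K \<and> \<not> K \<subseteq> fst s - snd s \<and> \<not> K \<subseteq> snd s - fst s}"
proof (rule finite_subset)
  show "{K. component_in V E S K \<and> \<not> K \<subseteq> fst s - snd s \<and> \<not> K \<subseteq> snd s - fst s}
      \<subseteq> {K. component_in V E S K \<and> K \<inter> (fst s \<inter> snd s) \<noteq> {}}"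
  proof
    fix K assume "K \<in> {K. component_in V E S K \<and> \<not> K \<subseteq> fst s - snd s \<and> \<not> K \<subseteq> snd s - fst s}"
    then show "K \<in> {K. component_in V E S K \<and> K \<inter> (fst s \<inter> snd s) \<noteq> {}}"
      using component_in_side[OF G sep, of S K] by auto
  qed
qed (rule components_meeting_finite[OF G fin])

section \<open>The tangle induced by an ultrafilter on components\<close>

definition almost_all_right_of :: "('a set \<times> 'a set) set \<Rightarrow> 'a set set \<Rightarrow> bool" where
  "almost_all_right_of \<sigma> \<C> \<longleftrightarrow> (\<forall>s\<in>\<sigma>. finite {C\<in>\<C>. \<not> C \<subseteq> snd s - fst s})"

locale component_ultrafilter =
  fixes V :: "'a set" and E :: "'a \<Rightarrow> 'a \<Rightarrow> bool" and X :: "'a set"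
    and \<C> :: "'a set set" and \<U> :: "'a set set set"
  assumes graph: "graph V E"
    and components: "C \<in> \<C> \<Longrightarrow> component_in V E (V - X) C"
    and ultrafilter: "free_ultrafilter_on \<C> \<U>"
begin

definition large :: "'a set \<Rightarrow> bool" where
  "large S \<longleftrightarrow> {C\<in>\<C>. C \<subseteq> S} \<in> \<U>"

definition tangle :: "nat \<Rightarrow> ('a set \<times> 'a set) set" where
  "tangle k = {s \<in> vS V E k. large (snd s - fst s)}"

lemma large_infinite: "large S \<Longrightarrow> infinite {C\<in>\<C>. C \<subseteq> S}"
  unfolding large_def by (rule free_ultrafilter_onD(1)[OF ultrafilter])

lemma large_Int:
  assumes "large S" "large T"
  shows "large (S \<inter> T)"
proof -
  have "{C\<in>\<C>. C \<subseteq> S} \<inter> {C\<in>\<C>. C \<subseteq> T} \<in> \<U>"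
    using assms unfolding large_def by (rule free_ultrafilter_onD(2)[OF ultrafilter])
  moreover have "{C\<in>\<C>. C \<subseteq> S} \<inter> {C\<in>\<C>. C \<subseteq> T} = {C\<in>\<C>. C \<subseteq> S \<inter> T}" by blast
  ultimately show ?thesis unfolding large_def by simp
qed

lemma large_INT: "finite I \<Longrightarrow> (\<And>i. i \<in> I \<Longrightarrow> large (f i)) \<Longrightarrow> large (\<Inter>i\<in>I. f i)"
proof (induction I rule: finite_induct)
  case empty
  then show ?case using free_ultrafilter_on_carrier[OF ultrafilter] unfolding large_def by simp
next
  case (insert i I)
  then show ?case using large_Int by simp
qed

lemma large_disjoint:
  assumes "large S" "large T" "S \<inter> T = {}"
  shows False
proof -
  have "infinite {C\<in>\<C>. C \<subseteq> {}}" using large_infinite[OF large_Int[OF assms(1,2)]] assms(3) by simp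
  moreover have "{C\<in>\<C>. C \<subseteq> {}} = {}" using component_in_nonempty[OF components] by auto
  ultimately show False by simp
qed

lemma large_if_almost_all:
  assumes "finite {C\<in>\<C>. \<not> C \<subseteq> S}"
  shows "large S"
proof -
  have "\<C> - {C\<in>\<C>. C \<subseteq> S} = {C\<in>\<C>. \<not> C \<subseteq> S}" by blast
  then have "\<C> - {C\<in>\<C>. C \<subseteq> S} \<notin> \<U>" using free_ultrafilter_onD(1)[OF ultrafilter] assms by auto
  then show ?thesis
    unfolding large_def by (auto intro: free_ultrafilter_on_complement[OF ultrafilter])
qed

lemma large_side:
  assumes sep: "is_sep V E s" "finite (fst s \<inter> snd s)"
  shows "large (fst s - snd s) \<or> large (snd s - fst s)"
proof (rule ccontr)
  let ?L = "{C\<in>\<C>. C \<subseteq> fst s - snd s}" and ?R = "{C\<in>\<C>. C \<subseteq> snd s - fst s}"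
  assume "\<not> (large (fst s - snd s) \<or> large (snd s - fst s))"
  then have "?L \<notin> \<U>" "?R \<notin> \<U>" unfolding large_def by simp_all
  then have "\<C> - ?L \<in> \<U>" "\<C> - ?R \<in> \<U>"
    by (auto intro: free_ultrafilter_on_complement[OF ultrafilter])
  then have "(\<C> - ?L) \<inter> (\<C> - ?R) \<in> \<U>" by (rule free_ultrafilter_onD(2)[OF ultrafilter])
  then have inf: "infinite ((\<C> - ?L) \<inter> (\<C> - ?R))" by (rule free_ultrafilter_onD(1)[OF ultrafilter])
  have "(\<C> - ?L) \<inter> (\<C> - ?R)
      \<subseteq> {K. component_in V E (V - X) K \<and> \<not> K \<subseteq> fst s - snd s \<and> \<not> K \<subseteq> snd s - fst s}"
    using components by auto
  from finite_subset[OF this components_straddling_finite[OF graph sep]] inf show False by simp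
qed

lemma tangle_is_orientation: "is_orientation V E k (tangle k)"
  unfolding is_orientation_def
proof (intro conjI ballI impI)
  show "tangle k \<subseteq> vS V E k" unfolding tangle_def by blast
next
  fix s assume s: "s \<in> vS V E k"
  then have "is_sep V E s" "finite (fst s \<inter> snd s)" unfolding vS_def by auto
  then show "s \<in> tangle k \<or> flip s \<in> tangle k"
    using large_side[OF \<open>is_sep V E s\<close> \<open>finite (fst s \<inter> snd s)\<close>] vS_flip[OF graph s] s
    unfolding tangle_def flip_def by auto
next
  fix s assume "s \<in> tangle k" "flip s \<in> tangle k"
  then have False
    using large_disjoint[of "snd s - fst s" "fst s - snd s"] unfolding tangle_def flip_def by auto
  then show "flip s = s" ..
qed

lemma tangle_consistent: "consistent (tangle k)"
  unfolding consistent_def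
proof (intro notI, elim exE conjE)
  fix s t assume "sep_less s t" "flip s \<in> tangle k" "t \<in> tangle k"
  then show False
    using large_disjoint[of "fst s - snd s" "snd t - fst t"]
    unfolding tangle_def flip_def sep_less_def sep_le_def by auto
qed

lemma tangle_avoids:
  assumes "finite \<rho>" "finite (interior V \<rho>)"
  shows "\<not> \<rho> \<subseteq> tangle k"
proof
  let ?I = "\<Inter>s\<in>\<rho>. snd s - fst s"
  assume "\<rho> \<subseteq> tangle k"
  then have "large (snd s - fst s)" if "s \<in> \<rho>" for s using that unfolding tangle_def by auto
  then have "large ?I" by (rule large_INT[OF assms(1)])
  then have inf: "infinite {C\<in>\<C>. C \<subseteq> ?I}" by (rule large_infinite)
  have "{C\<in>\<C>. C \<subseteq> ?I} \<subseteq> {K. component_in V E (V - X) K \<and> K \<inter> interior V \<rho> \<noteq> {}}"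
  proof
    fix C assume C: "C \<in> {C\<in>\<C>. C \<subseteq> ?I}"
    then have K: "component_in V E (V - X) C" using components by simp
    have "C \<subseteq> interior V \<rho>"
      using C component_in_subset[OF K] unfolding interior_def by auto
    with K component_in_nonempty[OF K]
    show "C \<in> {K. component_in V E (V - X) K \<and> K \<inter> interior V \<rho> \<noteq> {}}" by auto
  qed
  from finite_subset[OF this components_meeting_finite[OF graph assms(2)]] inf show False by simp
qed

lemma tangle_contains: "\<sigma> \<subseteq> vS V E k \<Longrightarrow> almost_all_right_of \<sigma> \<C> \<Longrightarrow> \<sigma> \<subseteq> tangle k"
  unfolding almost_all_right_of_def tangle_def using large_if_almost_all by blast

lemma tangle_not_principal:
  assumes X: "X \<subseteq> V" "finite X" "card X < k"
  shows "\<not> principal V E k (tangle k)"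
proof
  assume "principal V E k (tangle k)"
  then obtain K where K: "component_in V E (V - X) K" "(V - K, K \<union> X) \<in> tangle k"
    using X unfolding principal_def by blast
  moreover have "(K \<union> X) - (V - K) = K" using component_in_subset[OF K(1)] X(1) by auto
  ultimately have "large K" unfolding tangle_def by simp
  then have inf: "infinite {C\<in>\<C>. C \<subseteq> K}" by (rule large_infinite)
  have "{C\<in>\<C>. C \<subseteq> K} \<subseteq> {K}"
  proof
    fix C assume C: "C \<in> {C\<in>\<C>. C \<subseteq> K}"
    then have CK: "component_in V E (V - X) C" using components by simp
    obtain x where "x \<in> C" using component_in_nonempty[OF CK] by auto
    with C have "C = K" using component_in_eqI[OF graph CK K(1)] by auto
    then show "C \<in> {K}" by simp
  qed
  from finite_subset[OF this] inf show False by simp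
qed

end

lemma tangle_from_components:
  assumes G: "graph V E" and F: "\<forall>\<rho>\<in>\<F>. finite \<rho> \<and> finite (interior V \<rho>)"
    and sig: "\<sigma> \<subseteq> vS V E k" and X: "X \<subseteq> V" "finite X" "card X < k"
    and \<C>: "infinite \<C>" "\<forall>C\<in>\<C>. component_in V E (V - X) C" "almost_all_right_of \<sigma> \<C>"
  shows "\<exists>\<tau>. F_tangle V E k \<F> \<tau> \<and> \<not> principal V E k \<tau> \<and> \<sigma> \<subseteq> \<tau>"
proof -
  obtain \<U> where "free_ultrafilter_on \<C> \<U>" using free_ultrafilter_exists[OF \<C>(1)] .
  then interpret component_ultrafilter V E X \<C> \<U>
    using G \<C>(2) by unfold_locales auto
  have "F_tangle V E k \<F> (tangle k)"
    using tangle_is_orientation tangle_consistent tangle_avoids F unfolding F_tangle_def by blast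
  with tangle_not_principal[OF X] tangle_contains[OF sig \<C>(3)] show ?thesis by blast
qed

section \<open>Stars and torsos\<close>

lemma star_sepD:
  assumes "is_star V E \<sigma>" "s \<in> \<sigma>"
  shows "is_sep V E s" "finite (fst s \<inter> snd s)"
  using assms unfolding is_star_def finite_order_seps_def by auto

lemma star_fst_subset_snd:
  "is_star V E \<sigma> \<Longrightarrow> s \<in> \<sigma> \<Longrightarrow> t \<in> \<sigma> \<Longrightarrow> s \<noteq> t \<Longrightarrow> fst s \<subseteq> snd t"
  unfolding is_star_def sep_le_def flip_def by auto

lemma star_strict_sides:
  assumes "is_star V E \<sigma>" "s \<in> \<sigma>" "t \<in> \<sigma>" "s \<noteq> t"
  shows "fst t - snd t \<subseteq> snd s - fst s"
  using star_fst_subset_snd[OF assms] star_fst_subset_snd[OF assms(1,3,2)] assms(4) by blast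

lemma interior_subset_snd: "s \<in> \<sigma> \<Longrightarrow> interior V \<sigma> \<subseteq> snd s"
  unfolding interior_def by blast

lemma separator_subset_interior:
  assumes star: "is_star V E \<sigma>" and s: "s \<in> \<sigma>"
  shows "fst s \<inter> snd s \<subseteq> interior V \<sigma>"
  unfolding interior_def
  using is_sepD(1)[OF star_sepD(1)[OF star s]] star_fst_subset_snd[OF star s] by blast

lemma tight_component_family:
  assumes star: "is_star V E \<sigma>" and tight: "\<forall>s\<in>\<sigma>. left_tight V E s"
    and inf: "infinite {s \<in> \<sigma>. fst s \<inter> snd s = X}"
  shows "\<exists>\<C>. infinite \<C> \<and> (\<forall>C\<in>\<C>. component_in V E (V - X) C) \<and> almost_all_right_of \<sigma> \<C>"
proof -
  let ?S = "{s \<in> \<sigma>. fst s \<inter> snd s = X}"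
  define c where "c s = (SOME C. component_in V E (fst s - snd s) C \<and> nbhd V E C = fst s \<inter> snd s)" for s
  have c: "component_in V E (fst s - snd s) (c s)" "nbhd V E (c s) = fst s \<inter> snd s" if "s \<in> \<sigma>" for s
    using someI_ex[OF tight[unfolded left_tight_def, rule_format, OF that]] unfolding c_def by blast+
  have c_strict: "c s \<subseteq> fst s - snd s" "c s \<noteq> {}" if "s \<in> \<sigma>" for s
    using component_in_subset[OF c(1)[OF that]] component_in_nonempty[OF c(1)[OF that]] by auto
  have c_right: "c t \<subseteq> snd s - fst s" if "s \<in> \<sigma>" "t \<in> \<sigma>" "s \<noteq> t" for s t
    using c_strict(1)[OF that(2)] star_strict_sides[OF star that] by blast
  have "inj_on c ?S"
  proof (rule inj_onI)
    fix s t assume "s \<in> ?S" "t \<in> ?S" "c s = c t"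
    then show "s = t" using c_strict[of s] c_right[of s t] by blast
  qed
  then have "infinite (c ` ?S)" using inf finite_imageD by blast
  moreover have "component_in V E (V - X) (c s)" if "s \<in> ?S" for s
    using that c[of s] by (intro component_in_minus[of V E "fst s - snd s"]) auto
  moreover have "almost_all_right_of \<sigma> (c ` ?S)"
    unfolding almost_all_right_of_def
  proof
    fix s assume "s \<in> \<sigma>"
    then have "{C\<in>c ` ?S. \<not> C \<subseteq> snd s - fst s} \<subseteq> {c s}" using c_right by blast
    then show "finite {C\<in>c ` ?S. \<not> C \<subseteq> snd s - fst s}" by (rule finite_subset) simp
  qed
  ultimately show ?thesis by blast
qed

lemma torso_graph: "graph V E \<Longrightarrow> graph (interior V \<sigma>) (torso_edges V E \<sigma>)"
  unfolding graph_def torso_edges_def by blast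

text \<open>A path of \<open>G - X\<close> leaving the interior through some \<open>(A, B) \<in> \<sigma>\<close> has to return
  through the separator \<open>A \<inter> B\<close>, which is a clique of the torso: so the vertices of the
  interior reachable from \<open>u\<close> in \<open>G - X\<close> are reachable from \<open>u\<close> in \<open>torso(\<sigma>) - X\<close>.\<close>
lemma torso_reachable:
  assumes G: "graph V E" and star: "is_star V E \<sigma>"
    and u: "u \<in> interior V \<sigma> - X" and path: "v \<in> component_of V E (V - X) u"
    and v: "v \<in> interior V \<sigma>"
  shows "v \<in> component_of (interior V \<sigma>) (torso_edges V E \<sigma>) (interior V \<sigma> - X) u"
proof -
  let ?W = "interior V \<sigma>"
  let ?T = "component_of ?W (torso_edges V E \<sigma>) (?W - X) u"
  have T_sub: "?T \<subseteq> ?W - X" using component_of_subset[of u "?W - X" ?W] u by blast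
  have torso_step: "b \<in> ?T" if "a \<in> ?T" "b \<in> ?W - X" "torso_edges V E \<sigma> a b" for a b
    using component_of_step[OF that(1,3)] that T_sub by blast
  have sep: "is_sep V E s" if "s \<in> \<sigma>" for s using star_sepD(1)[OF star that] .
  have "(\<lambda>a b. E a b \<and> a \<in> (V - X) \<inter> V \<and> b \<in> (V - X) \<inter> V)\<^sup>*\<^sup>* u v"
    using path unfolding component_of_def by simp
  then have "\<exists>w \<in> ?T. v = w \<or> (\<exists>s\<in>\<sigma>. v \<in> fst s - snd s \<and> w \<in> fst s \<inter> snd s)"
  proof (induction rule: rtranclp_induct)
    case base show ?case using component_of_self[of u] by blast
  next
    case (step y z)
    then have yz: "E y z" "z \<in> V - X" by auto
    from step.IH obtain w where w: "w \<in> ?T"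
      and wy: "y = w \<or> (\<exists>s\<in>\<sigma>. y \<in> fst s - snd s \<and> w \<in> fst s \<inter> snd s)" by blast
    show ?case
      using wy
    proof
      assume "y = w"
      show ?case
      proof (cases "z \<in> ?W")
        case True
        then have "z \<in> ?T"
          using torso_step[of y z] w yz T_sub \<open>y = w\<close> unfolding torso_edges_def by blast
        then show ?thesis by blast
      next
        case False
        then obtain s where s: "s \<in> \<sigma>" "z \<in> fst s - snd s"
          using yz is_sepD(3)[OF sep] unfolding interior_def by blast
        have "y \<in> snd s" using w T_sub interior_subset_snd[OF s(1)] \<open>y = w\<close> by blast
        moreover have "y \<notin> snd s - fst s" using is_sep_edge_snd[OF G sep[OF s(1)] _ yz(1)] s(2) by blast
        ultimately show ?thesis using w s \<open>y = w\<close> by blast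
      qed
    next
      assume "\<exists>s\<in>\<sigma>. y \<in> fst s - snd s \<and> w \<in> fst s \<inter> snd s"
      then obtain s where s: "s \<in> \<sigma>" "y \<in> fst s - snd s" "w \<in> fst s \<inter> snd s" by blast
      show ?case
      proof (cases "z \<in> snd s")
        case False
        then show ?thesis using w s is_sep_edge_fst[OF G sep[OF s(1)] s(2) yz(1)] by blast
      next
        case True
        then have "z \<in> fst s \<inter> snd s" using is_sep_edge_fst[OF G sep[OF s(1)] s(2) yz(1)] by blast
        then have "z \<in> ?W - X" using separator_subset_interior[OF star s(1)] yz by blast
        moreover have "z = w \<or> torso_edges V E \<sigma> w z"
          using \<open>z \<in> fst s \<inter> snd s\<close> s(1,3) \<open>z \<in> ?W - X\<close> w T_sub unfolding torso_edges_def by blast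
        ultimately have "z \<in> ?T" using torso_step w by blast
        then show ?thesis by blast
      qed
    qed
  qed
  then show ?thesis using v interior_subset_snd by blast
qed

lemma components_meeting_interior_infinite:
  assumes G: "graph V E" and star: "is_star V E \<sigma>"
    and inf: "infinite {K. component_in (interior V \<sigma>) (torso_edges V E \<sigma>) (interior V \<sigma> - X) K}"
  shows "infinite {C. component_in V E (V - X) C \<and> C \<inter> interior V \<sigma> \<noteq> {}}"
proof -
  let ?W = "interior V \<sigma>" and ?H = "torso_edges V E \<sigma>"
  let ?K = "{K. component_in ?W ?H (?W - X) K}"
  define p where "p K = (SOME x. x \<in> K)" for K :: "'a set"
  have p: "p K \<in> K" if "K \<in> ?K" for K
    using component_in_nonempty[of ?W ?H "?W - X" K] that unfolding p_def by (simp add: some_in_eq)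
  have pW: "p K \<in> ?W - X" if "K \<in> ?K" for K
    using p[OF that] component_in_subset[of ?W ?H "?W - X" K] that by blast
  define f where "f K = component_of V E (V - X) (p K)" for K
  have "inj_on f ?K"
  proof (rule inj_onI)
    fix K1 K2 assume K1: "K1 \<in> ?K" and K2: "K2 \<in> ?K" and "f K1 = f K2"
    then have "p K2 \<in> component_of V E (V - X) (p K1)"
      using component_of_self[of "p K2" V E "V - X"] unfolding f_def by simp
    moreover have "p K2 \<in> ?W" using pW[OF K2] by blast
    ultimately have "p K2 \<in> component_of ?W ?H (?W - X) (p K1)"
      by (rule torso_reachable[OF G star pW[OF K1]])
    moreover have "K1 = component_of ?W ?H (?W - X) (p K1)"
      using component_in_eq_component_of[OF torso_graph[OF G] _ p[OF K1]] K1 by simp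
    ultimately have "p K2 \<in> K1" by simp
    from component_in_eqI[OF torso_graph[OF G] _ _ this p[OF K2]] K1 K2 show "K1 = K2" by simp
  qed
  then have inf_image: "infinite (f ` ?K)" using inf finite_imageD by blast
  have "f ` ?K \<subseteq> {C. component_in V E (V - X) C \<and> C \<inter> ?W \<noteq> {}}"
  proof
    fix C assume "C \<in> f ` ?K"
    then obtain K where K: "K \<in> ?K" and C: "C = component_of V E (V - X) (p K)"
      unfolding f_def by blast
    have "p K \<in> (V - X) \<inter> V" using pW[OF K] unfolding interior_def by blast
    then have "component_in V E (V - X) C" unfolding C by (rule component_in_component_of)
    moreover have "p K \<in> C \<inter> ?W" using pW[OF K] component_of_self[of "p K"] unfolding C by blast
    ultimately show "C \<in> {C. component_in V E (V - X) C \<and> C \<inter> ?W \<noteq> {}}" by blast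
  qed
  from infinite_super[OF this inf_image] show ?thesis .
qed

lemma almost_all_right_of_meeting_interior:
  assumes G: "graph V E" and star: "is_star V E \<sigma>"
  shows "almost_all_right_of \<sigma> {C. component_in V E S C \<and> C \<inter> interior V \<sigma> \<noteq> {}}"
  unfolding almost_all_right_of_def
proof
  fix s assume s: "s \<in> \<sigma>"
  show "finite {C \<in> {C. component_in V E S C \<and> C \<inter> interior V \<sigma> \<noteq> {}}. \<not> C \<subseteq> snd s - fst s}"
  proof (rule finite_subset)
    show "{C \<in> {C. component_in V E S C \<and> C \<inter> interior V \<sigma> \<noteq> {}}. \<not> C \<subseteq> snd s - fst s}
        \<subseteq> {K. component_in V E S K \<and> \<not> K \<subseteq> fst s - snd s \<and> \<not> K \<subseteq> snd s - fst s}"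
    proof
      fix C assume "C \<in> {C \<in> {C. component_in V E S C \<and> C \<inter> interior V \<sigma> \<noteq> {}}. \<not> C \<subseteq> snd s - fst s}"
      then have C: "component_in V E S C" "C \<inter> interior V \<sigma> \<noteq> {}" "\<not> C \<subseteq> snd s - fst s"
        by auto
      then have "\<not> C \<subseteq> fst s - snd s" using interior_subset_snd[OF s] by blast
      with C show "C \<in> {K. component_in V E S K \<and> \<not> K \<subseteq> fst s - snd s \<and> \<not> K \<subseteq> snd s - fst s}"
        by blast
    qed
  qed (rule components_straddling_finite[OF G star_sepD[OF star s]])
qed

lemma critical_component_family:
  assumes G: "graph V E" and star: "is_star V E \<sigma>"
    and crit: "critical (interior V \<sigma>) (torso_edges V E \<sigma>) X"
  shows "\<exists>\<C>. infinite \<C> \<and> (\<forall>C\<in>\<C>. component_in V E (V - X) C) \<and> almost_all_right_of \<sigma> \<C>"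
proof -
  let ?W = "interior V \<sigma>" and ?H = "torso_edges V E \<sigma>"
  have "{K. component_in ?W ?H (?W - X) K \<and> nbhd ?W ?H K = X} \<subseteq> {K. component_in ?W ?H (?W - X) K}"
    by blast
  from infinite_super[OF this] crit have "infinite {K. component_in ?W ?H (?W - X) K}"
    unfolding critical_def by blast
  then have "infinite {C. component_in V E (V - X) C \<and> C \<inter> ?W \<noteq> {}}"
    by (rule components_meeting_interior_infinite[OF G star])
  with almost_all_right_of_meeting_interior[OF G star] show ?thesis by blast
qed

theorem lemma3p8:
  fixes V :: "'a set" and E :: "'a \<Rightarrow> 'a \<Rightarrow> bool" and k :: nat
    and \<F> :: "('a set \<times> 'a set) set set" and \<sigma> :: "('a set \<times> 'a set) set" and X :: "'a set"
  assumes G: "graph V E"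
    and F: "\<forall>\<rho> \<in> \<F>. finite \<rho> \<and> \<rho> \<subseteq> vS V E k \<and> is_star V E \<rho> \<and> finite (interior V \<rho>)"
    and sig: "\<sigma> \<subseteq> vS V E k" "is_star V E \<sigma>" "\<forall>s \<in> \<sigma>. left_tight V E s"
    and X: "X \<subseteq> interior V \<sigma>" "finite X" "card X < k"
    and crit: "critical (interior V \<sigma>) (torso_edges V E \<sigma>) X
               \<or> infinite {s \<in> \<sigma>. fst s \<inter> snd s = X}"
  shows "\<exists>\<tau>. F_tangle V E k \<F> \<tau> \<and> \<not> principal V E k \<tau> \<and> \<sigma> \<subseteq> \<tau>"
proof -
  have XV: "X \<subseteq> V" using X(1) unfolding interior_def by blast
  have F': "\<forall>\<rho>\<in>\<F>. finite \<rho> \<and> finite (interior V \<rho>)" using F by blast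
  obtain \<C> where "infinite \<C>" "\<forall>C\<in>\<C>. component_in V E (V - X) C" "almost_all_right_of \<sigma> \<C>"
    using crit critical_component_family[OF G sig(2)] tight_component_family[OF sig(2,3)] by blast
  then show ?thesis using tangle_from_components[OF G F' sig(1) XV X(2,3)] by blast
qed

end
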